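(* Let $C\subseteq 2^X$ be a maximum class of VC-dimension $d$ and $D\subseteq C$ a maximum class of VC-dimension $d-1$. Let $Q$ be an incomplete cube for $(C,D)$ with source $s$ and support $\sigma$, and let $x,y\in X$ with $x\notin\sigma$ and $y\in\sigma$. Then: (i) $Q_x$ is an incomplete cube for $(C_x,D_x)$ whose source is $s_x$; (ii) $Q^y$ is an incomplete cube for $(C^y,D^y)$ whose source is $s^y$.
   Context: $X$ is a finite set, $n=|X|$; concepts are identified with characteristic functions, $c|Y$ is restriction and $C|Y=\{c|Y:c\in C\}$. $Y$ is shattered by $C$ if $C|Y=2^Y$; $X(C)$ is the family of shattered sets; VC-dimension is the maximum size of a shattered set; $C$ is maximum if $|C|=\sum_{i=0}^d\binom{n}{i}$, $d$ its VC-dimension. A cube of $2^X$ is $\{T\cup Z:Z\subseteq Y\}$ with $Y\subseteq X$, $T\subseteq X\setminus Y$; $Y=\mathrm{supp}$ is its support and $T$ its tag; a cube of $C$ is a cube contained in $C$. For $x\in X$: $c_x=c|(X\setminus\{x\})$ and $C_x=\{c_x:c\in C\}$ (restriction, a class on $X\setminus\{x\}$); the reduction $C^x$ is the class on $X\setminus\{x\}$ consisting of the tags of all cubes of $C$ with support $\{x\}$ (i.e. of $c\setminus\{x\}$ for all $c$ with $c,c\Delta\{x\}\in C$), and for such $c$, $c^x=c\setminus\{x\}$; the same notation applies to $D$ and to a cube $Q$ (so $Q_x$, $Q^y$, $s_x$, $s^y$). A missed simplex for $(C,D)$ is $\sigma\in X(C)\setminus X(D)$; an incomplete cube for $(C,D)$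 is a cube $Q$ of $C$ whose support is a missed simplex; its source is the unique $c\in Q$ with $c|\mathrm{supp}(Q)\notin D|\mathrm{supp}(Q)$. (Incomplete cubes and sources for $(C_x,D_x)$ and $(C^y,D^y)$ are defined in the same way.) *)

theory Defs
  imports Main
begin

text \<open>Concepts are subsets of the finite domain X (identified with their characteristic functions).\<close>

definition restrict_class :: "'a set set \<Rightarrow> 'a set \<Rightarrow> 'a set set" where
  "restrict_class C Y = (\<lambda>c. c \<inter> Y) ` C"

definition shatters :: "'a set set \<Rightarrow> 'a set \<Rightarrow> bool" where
  "shatters C Y \<longleftrightarrow> restrict_class C Y = Pow Y"

text \<open>VC-dimension k (an integer, -1 for the empty class, where no set is shattered).\<close>
definition has_vc_dim :: "'a set \<Rightarrow> 'a set set \<Rightarrow> int \<Rightarrow> bool" where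
  "has_vc_dim X C k \<longleftrightarrow> k \<ge> -1
     \<and> (\<forall>Y. Y \<subseteq> X \<and> shatters C Y \<longrightarrow> int (card Y) \<le> k)
     \<and> (k \<ge> 0 \<longrightarrow> (\<exists>Y. Y \<subseteq> X \<and> shatters C Y \<and> int (card Y) = k))"

definition maximum_class :: "'a set \<Rightarrow> 'a set set \<Rightarrow> int \<Rightarrow> bool" where
  "maximum_class X C k \<longleftrightarrow> C \<subseteq> Pow X \<and> has_vc_dim X C k
     \<and> card C = (\<Sum>i\<in>{0..k}. card X choose nat i)"

definition cube_with :: "'a set \<Rightarrow> 'a set set \<Rightarrow> 'a set \<Rightarrow> 'a set \<Rightarrow> bool" where
  "cube_with X Q \<sigma> T \<longleftrightarrow> \<sigma> \<subseteq> X \<and> T \<subseteq> X - \<sigma> \<and> Q = {T \<union> Z | Z. Z \<subseteq> \<sigma>}"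

definition is_cube :: "'a set \<Rightarrow> 'a set set \<Rightarrow> 'a set \<Rightarrow> bool" where
  "is_cube X Q \<sigma> \<longleftrightarrow> (\<exists>T. cube_with X Q \<sigma> T)"

text \<open>Q is an incomplete cube for (C,D) (over domain X) with support sigma:
  a cube of C whose support is a missed simplex.\<close>
definition incomplete_cube :: "'a set \<Rightarrow> 'a set set \<Rightarrow> 'a set set \<Rightarrow> 'a set set \<Rightarrow> 'a set \<Rightarrow> bool" where
  "incomplete_cube X C D Q \<sigma> \<longleftrightarrow> is_cube X Q \<sigma> \<and> Q \<subseteq> C \<and> shatters C \<sigma> \<and> \<not> shatters D \<sigma>"

definition is_source :: "'a set set \<Rightarrow> 'a set set \<Rightarrow> 'a set \<Rightarrow> 'a set \<Rightarrow> bool" where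
  "is_source D Q \<sigma> s \<longleftrightarrow> s \<in> Q \<and> s \<inter> \<sigma> \<notin> restrict_class D \<sigma>
     \<and> (\<forall>c\<in>Q. c \<inter> \<sigma> \<notin> restrict_class D \<sigma> \<longrightarrow> c = s)"

definition del_class :: "'a set set \<Rightarrow> 'a \<Rightarrow> 'a set set" where
  "del_class C x = (\<lambda>c. c - {x}) ` C"

definition reduction :: "'a set set \<Rightarrow> 'a \<Rightarrow> 'a set set" where
  "reduction C x = {c - {x} | c. c \<in> C \<and> (c - {x}) \<union> ({x} - c) \<in> C}"

end

theory Submission
  imports Defs
begin

text \<open>
  Deleting a point x outside the support does not change any trace on \<sigma>, which gives (i)
  directly. For (ii), Q^y is the cube with the same tag and support \<sigma> - {y}; its sources
  are governed by the traces of D^y on \<sigma> - {y}, whereas the source of Q is governed by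
  the traces of D on \<sigma>. The first class is always contained in (D|\<sigma>)^y, and the two
  coincide because restrictions and reductions of a maximum class are again maximum (of
  the same, respectively one lower, VC-dimension): by the Sauer--Shelah bound and the
  identity |C| = |C_x| + |C^x| both classes have exactly the maximal number of elements.
\<close>

lemma shatters_iff: "shatters C Y \<longleftrightarrow> (\<forall>P\<subseteq>Y. \<exists>c\<in>C. c \<inter> Y = P)"
proof -
  have "restrict_class C Y \<subseteq> Pow Y"
    unfolding restrict_class_def by blast
  then have "shatters C Y \<longleftrightarrow> Pow Y \<subseteq> restrict_class C Y"
    unfolding shatters_def by blast
  also have "\<dots> \<longleftrightarrow> (\<forall>P\<subseteq>Y. \<exists>c\<in>C. c \<inter> Y = P)"
    unfolding restrict_class_def by (auto simp: subset_eq image_iff eq_commute)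
  finally show ?thesis .
qed

lemma shatters_mono:
  assumes "C \<subseteq> C'" and "shatters C Y"
  shows "shatters C' Y"
  using assms unfolding shatters_iff by (meson subsetD)

lemma mem_reduction_iff: "z \<in> reduction C x \<longleftrightarrow> x \<notin> z \<and> z \<in> C \<and> insert x z \<in> C"
proof
  assume "z \<in> reduction C x"
  then obtain c where "c \<in> C" "c - {x} \<union> ({x} - c) \<in> C" "z = c - {x}"
    unfolding reduction_def by blast
  then show "x \<notin> z \<and> z \<in> C \<and> insert x z \<in> C"
    by (cases "x \<in> c") (auto simp: insert_absorb)
next
  assume "x \<notin> z \<and> z \<in> C \<and> insert x z \<in> C"
  then show "z \<in> reduction C x"
    unfolding reduction_def by (intro CollectI exI[of _ z]) auto
qed

lemma reduction_mono: "C \<subseteq> C' \<Longrightarrow> reduction C x \<subseteq> reduction C' x"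
  by (auto simp: mem_reduction_iff)

lemma del_class_subset_Pow: "C \<subseteq> Pow X \<Longrightarrow> del_class C x \<subseteq> Pow (X - {x})"
  unfolding del_class_def by blast

lemma reduction_subset_Pow: "C \<subseteq> Pow X \<Longrightarrow> reduction C x \<subseteq> Pow (X - {x})"
  by (auto simp: mem_reduction_iff)

lemma restrict_class_del_class:
  "x \<notin> Y \<Longrightarrow> restrict_class (del_class C x) Y = restrict_class C Y"
  unfolding restrict_class_def del_class_def image_image by (rule image_cong) auto

lemma shatters_del_class_iff:
  "x \<notin> Y \<Longrightarrow> shatters (del_class C x) Y \<longleftrightarrow> shatters C Y"
  by (simp add: shatters_def restrict_class_del_class)

lemma shatters_insert_if_shatters_reduction:
  assumes "x \<notin> Y" and "shatters (reduction C x) Y"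
  shows "shatters C (insert x Y)"
  unfolding shatters_iff
proof (intro allI impI)
  fix P assume P: "P \<subseteq> insert x Y"
  then have "P - {x} \<subseteq> Y"
    by blast
  then obtain z where z: "z \<in> reduction C x" "z \<inter> Y = P - {x}"
    using assms(2) unfolding shatters_iff by meson
  then have "x \<notin> z" "z \<in> C" "insert x z \<in> C"
    by (simp_all add: mem_reduction_iff)
  show "\<exists>c\<in>C. c \<inter> insert x Y = P"
  proof (cases "x \<in> P")
    case True
    then have "insert x z \<inter> insert x Y = P"
      using z(2) P by blast
    then show ?thesis
      using \<open>insert x z \<in> C\<close> by blast
  next
    case False
    then have "z \<inter> insert x Y = P"
      using z(2) P \<open>x \<notin> z\<close> by blast
    then show ?thesis
      using \<open>z \<in> C\<close> by blast
  qed
qed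

lemma restrict_class_Pow_eq: "C \<subseteq> Pow X \<Longrightarrow> restrict_class C X = C"
  unfolding restrict_class_def by (rule image_cong[THEN trans, OF refl _ image_ident]) auto

lemma restrict_class_Diff_singleton:
  "restrict_class C (Y - {x}) = del_class (restrict_class C Y) x"
  unfolding restrict_class_def del_class_def image_image by (rule image_cong) auto

lemma restrict_class_reduction_subset:
  assumes "y \<in> Y"
  shows "restrict_class (reduction C y) (Y - {y}) \<subseteq> reduction (restrict_class C Y) y"
proof
  fix w assume "w \<in> restrict_class (reduction C y) (Y - {y})"
  then obtain c where c: "c \<in> reduction C y" "w = c \<inter> (Y - {y})"
    unfolding restrict_class_def by blast
  then have "y \<notin> c" "c \<in> C" "insert y c \<in> C"
    by (simp_all add: mem_reduction_iff)
  moreover have "w = c \<inter> Y" "insert y w = insert y c \<inter> Y"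
    using c(2) \<open>y \<notin> c\<close> assms by auto
  ultimately show "w \<in> reduction (restrict_class C Y) y"
    unfolding mem_reduction_iff restrict_class_def using c(2) by blast
qed

lemma card_del_class_add_card_reduction:
  assumes "finite C"
  shows "card (del_class C x) + card (reduction C x) = card C"
proof -
  define C\<^sub>0 where "C\<^sub>0 = {c\<in>C. x \<notin> c}"
  define C\<^sub>1 where "C\<^sub>1 = {c\<in>C. x \<in> c}"
  have split: "C = C\<^sub>0 \<union> C\<^sub>1" "C\<^sub>0 \<inter> C\<^sub>1 = {}"
    unfolding C\<^sub>0_def C\<^sub>1_def by blast+
  have "(\<lambda>c. c - {x}) ` C\<^sub>0 = C\<^sub>0"
    unfolding C\<^sub>0_def by (rule trans[OF image_cong[OF refl] image_ident]) simp
  then have "del_class C x = C\<^sub>0 \<union> (\<lambda>c. c - {x}) ` C\<^sub>1"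
    unfolding del_class_def by (subst split(1)) (simp only: image_Un)
  moreover have "reduction C x = C\<^sub>0 \<inter> (\<lambda>c. c - {x}) ` C\<^sub>1"
  proof (intro set_eqI iffI)
    fix z assume "z \<in> reduction C x"
    then have "x \<notin> z" "z \<in> C" "insert x z \<in> C"
      by (simp_all add: mem_reduction_iff)
    then show "z \<in> C\<^sub>0 \<inter> (\<lambda>c. c - {x}) ` C\<^sub>1"
      unfolding C\<^sub>0_def C\<^sub>1_def by (simp add: image_iff) (metis Diff_insert_absorb insertI1)
  next
    fix z assume "z \<in> C\<^sub>0 \<inter> (\<lambda>c. c - {x}) ` C\<^sub>1"
    then show "z \<in> reduction C x"
      unfolding C\<^sub>0_def C\<^sub>1_def mem_reduction_iff by (auto simp: insert_absorb)
  qed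
  moreover have "card ((\<lambda>c. c - {x}) ` C\<^sub>1) = card C\<^sub>1"
    unfolding C\<^sub>1_def by (rule card_image) (auto simp: inj_on_def)
  moreover have "finite C\<^sub>0" "finite C\<^sub>1"
    using assms unfolding C\<^sub>0_def C\<^sub>1_def by simp_all
  moreover have "card C = card C\<^sub>0 + card C\<^sub>1"
    using \<open>finite C\<^sub>0\<close> \<open>finite C\<^sub>1\<close> by (simp add: split card_Un_disjoint)
  ultimately show ?thesis
    using card_Un_Int[of C\<^sub>0 "(\<lambda>c. c - {x}) ` C\<^sub>1"] by simp
qed

definition sauer_bound :: "int \<Rightarrow> nat \<Rightarrow> nat" where
  "sauer_bound k n = (\<Sum>i\<in>{0..k}. n choose nat i)"

lemma sauer_bound_of_nat: "sauer_bound (int m) n = (\<Sum>i\<le>m. n choose i)"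
proof -
  have "{0..int m} = int ` {..m}"
    using image_int_atLeastAtMost[of 0 m] by (simp add: atLeast0AtMost)
  then show ?thesis
    unfolding sauer_bound_def by (simp add: sum.reindex)
qed

lemma sauer_bound_neg: "k < 0 \<Longrightarrow> sauer_bound k n = 0"
  unfolding sauer_bound_def by simp

lemma sauer_bound_0: "0 \<le> k \<Longrightarrow> sauer_bound k 0 = 1"
proof -
  assume "0 \<le> k"
  then obtain m where "k = int m"
    using nonneg_int_cases by blast
  moreover have "(\<Sum>i\<le>m. (0::nat) choose i) = 1"
    by (induction m) auto
  ultimately show ?thesis
    by (simp only: sauer_bound_of_nat)
qed

lemma sauer_bound_Suc: "sauer_bound k (Suc n) = sauer_bound k n + sauer_bound (k - 1) n"
proof (cases "k < 0")
  case True
  then show ?thesis by (simp add: sauer_bound_neg)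
next
  case False
  then obtain m where m: "k = int m"
    by (metis nonneg_int_cases not_less)
  show ?thesis
  proof (cases m)
    case 0
    then show ?thesis
      using m by (simp add: sauer_bound_def)
  next
    case (Suc m')
    then have "k = int (Suc m')" "k - 1 = int m'"
      using m by simp_all
    moreover have "(\<Sum>i\<le>Suc m'. Suc n choose i) = (\<Sum>i\<le>Suc m'. n choose i) + (\<Sum>i\<le>m'. n choose i)"
      by (induction m') auto
    ultimately show ?thesis
      by (simp only: sauer_bound_of_nat)
  qed
qed

definition vc_dim_le :: "'a set \<Rightarrow> 'a set set \<Rightarrow> int \<Rightarrow> bool" where
  "vc_dim_le X C k \<longleftrightarrow> (\<forall>Y\<subseteq>X. shatters C Y \<longrightarrow> int (card Y) \<le> k)"

lemma vc_dim_leD: "vc_dim_le X C k \<Longrightarrow> Y \<subseteq> X \<Longrightarrow> shatters C Y \<Longrightarrow> int (card Y) \<le> k"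
  unfolding vc_dim_le_def by blast

lemma vc_dim_le_del_class:
  assumes "vc_dim_le X C k"
  shows "vc_dim_le (X - {x}) (del_class C x) k"
  unfolding vc_dim_le_def
proof (intro allI impI)
  fix Y assume Y: "Y \<subseteq> X - {x}" "shatters (del_class C x) Y"
  then have "x \<notin> Y" "Y \<subseteq> X"
    by auto
  moreover have "shatters C Y"
    using Y(2) shatters_del_class_iff[OF \<open>x \<notin> Y\<close>] by simp
  ultimately show "int (card Y) \<le> k"
    using vc_dim_leD[OF assms] by simp
qed

lemma vc_dim_le_reduction:
  assumes "finite X" and "x \<in> X" and "vc_dim_le X C k"
  shows "vc_dim_le (X - {x}) (reduction C x) (k - 1)"
  unfolding vc_dim_le_def
proof (intro allI impI)
  fix Y assume Y: "Y \<subseteq> X - {x}" "shatters (reduction C x) Y"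
  then have "x \<notin> Y" "insert x Y \<subseteq> X" "finite Y"
    using assms(1,2) finite_subset by auto
  moreover have "shatters C (insert x Y)"
    using shatters_insert_if_shatters_reduction \<open>x \<notin> Y\<close> Y(2) .
  ultimately show "int (card Y) \<le> k - 1"
    using vc_dim_leD[OF assms(3), of "insert x Y"] by simp
qed

theorem card_le_sauer_bound:
  assumes "finite X" and "C \<subseteq> Pow X" and "vc_dim_le X C k"
  shows "card C \<le> sauer_bound k (card X)"
  using assms
proof (induction X arbitrary: C k rule: finite_induct)
  case empty
  show ?case
  proof (cases "C = {}")
    case True
    then show ?thesis by simp
  next
    case False
    then have "shatters C {}"
      by (simp add: shatters_def restrict_class_def image_constant_conv)
    then have "0 \<le> k"
      using empty.prems(2) unfolding vc_dim_le_def by (metis card.empty empty_subsetI of_nat_0)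
    moreover have "card C \<le> card {{} :: 'a set}"
      using empty.prems(1) by (intro card_mono) auto
    ultimately show ?thesis
      by (simp add: sauer_bound_0)
  qed
next
  case (insert x X)
  have "finite C"
    using insert.hyps(1) insert.prems(1) by (meson finite_Pow_iff finite_insert rev_finite_subset)
  have X: "insert x X - {x} = X"
    using insert.hyps(2) by simp
  have "card (del_class C x) \<le> sauer_bound k (card X)"
    using insert.IH[OF del_class_subset_Pow[OF insert.prems(1), of x, unfolded X]
        vc_dim_le_del_class[OF insert.prems(2), of x, unfolded X]] .
  moreover have "card (reduction C x) \<le> sauer_bound (k - 1) (card X)"
    using insert.IH[OF reduction_subset_Pow[OF insert.prems(1), of x, unfolded X]
        vc_dim_le_reduction[OF _ _ insert.prems(2), of x, unfolded X]] insert.hyps(1) by simp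
  ultimately show ?case
    using card_del_class_add_card_reduction[OF \<open>finite C\<close>, of x] insert.hyps
    by (simp add: sauer_bound_Suc)
qed

text \<open>A maximum class in the sense of the paper, except that the VC-dimension is only
  bounded by k, not required to equal k.\<close>
definition meets_sauer_bound :: "'a set \<Rightarrow> 'a set set \<Rightarrow> int \<Rightarrow> bool" where
  "meets_sauer_bound X C k \<longleftrightarrow>
     finite X \<and> C \<subseteq> Pow X \<and> vc_dim_le X C k \<and> card C = sauer_bound k (card X)"

lemma maximum_class_meets_sauer_bound:
  "finite X \<Longrightarrow> maximum_class X C k \<Longrightarrow> meets_sauer_bound X C k"
  unfolding maximum_class_def has_vc_dim_def meets_sauer_bound_def vc_dim_le_def sauer_bound_def
  by blast

lemma meets_sauer_bound_del_class_reduction: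
  assumes "meets_sauer_bound X C k" and "x \<in> X"
  shows "meets_sauer_bound (X - {x}) (del_class C x) k"
    and "meets_sauer_bound (X - {x}) (reduction C x) (k - 1)"
proof -
  have X: "finite X" and C: "C \<subseteq> Pow X" "vc_dim_le X C k" "card C = sauer_bound k (card X)"
    using assms(1) unfolding meets_sauer_bound_def by auto
  have "finite C"
    using X C(1) by (meson finite_Pow_iff rev_finite_subset)
  note del = del_class_subset_Pow[OF C(1)] vc_dim_le_del_class[OF C(2)]
  note red = reduction_subset_Pow[OF C(1)] vc_dim_le_reduction[OF X assms(2) C(2)]
  have "card (del_class C x) \<le> sauer_bound k (card (X - {x}))"
    using card_le_sauer_bound[OF _ del] X by simp
  moreover have "card (reduction C x) \<le> sauer_bound (k - 1) (card (X - {x}))"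
    using card_le_sauer_bound[OF _ red] X by simp
  moreover have "card C = sauer_bound k (card (X - {x})) + sauer_bound (k - 1) (card (X - {x}))"
    using C(3) card_Suc_Diff1[OF X assms(2)] by (metis sauer_bound_Suc)
  ultimately have "card (del_class C x) = sauer_bound k (card (X - {x}))"
    and "card (reduction C x) = sauer_bound (k - 1) (card (X - {x}))"
    using card_del_class_add_card_reduction[OF \<open>finite C\<close>, of x] by linarith+
  then show "meets_sauer_bound (X - {x}) (del_class C x) k"
    and "meets_sauer_bound (X - {x}) (reduction C x) (k - 1)"
    unfolding meets_sauer_bound_def using X del red by simp_all
qed

lemma meets_sauer_bound_restrict_class:
  assumes "meets_sauer_bound X C k" and "Y \<subseteq> X"
  shows "meets_sauer_bound Y (restrict_class C Y) k"
proof -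
  have "meets_sauer_bound (X - W) (restrict_class C (X - W)) k" if "finite W" "W \<subseteq> X" for W
    using that
  proof (induction W rule: finite_induct)
    case empty
    then show ?case
      using assms(1) restrict_class_Pow_eq[of C X] unfolding meets_sauer_bound_def by simp
  next
    case (insert w W)
    then have "meets_sauer_bound (X - W - {w}) (del_class (restrict_class C (X - W)) w) k"
      by (intro meets_sauer_bound_del_class_reduction(1)) auto
    moreover have "X - insert w W = X - W - {w}"
      by blast
    ultimately show ?case
      by (simp add: restrict_class_Diff_singleton)
  qed
  moreover have "finite (X - Y)"
    using assms(1) unfolding meets_sauer_bound_def by simp
  moreover have "X - (X - Y) = Y"
    using assms(2) by blast
  ultimately show ?thesis
    by (metis Diff_subset)
qed

lemma restrict_class_reduction_eq:
  assumes "meets_sauer_bound X C k" and "Y \<subseteq> X" and "y \<in> Y"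
  shows "restrict_class (reduction C y) (Y - {y}) = reduction (restrict_class C Y) y"
proof (rule card_subset_eq)
  have "y \<in> X" "Y - {y} \<subseteq> X - {y}"
    using assms(2,3) by auto
  have "meets_sauer_bound (Y - {y}) (restrict_class (reduction C y) (Y - {y})) (k - 1)"
    by (rule meets_sauer_bound_restrict_class[OF
          meets_sauer_bound_del_class_reduction(2)[OF assms(1) \<open>y \<in> X\<close>] \<open>Y - {y} \<subseteq> X - {y}\<close>])
  moreover have "meets_sauer_bound (Y - {y}) (reduction (restrict_class C Y) y) (k - 1)"
    by (rule meets_sauer_bound_del_class_reduction(2)[OF
          meets_sauer_bound_restrict_class[OF assms(1,2)] assms(3)])
  ultimately show "finite (reduction (restrict_class C Y) y)"
    and "card (restrict_class (reduction C y) (Y - {y})) = card (reduction (restrict_class C Y) y)"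
    unfolding meets_sauer_bound_def by (auto intro: finite_subset)
qed (rule restrict_class_reduction_subset[OF assms(3)])

lemma cube_with_shatters:
  assumes "cube_with X Q \<sigma> T"
  shows "shatters Q \<sigma>"
  unfolding shatters_iff
proof (intro allI impI)
  fix P assume "P \<subseteq> \<sigma>"
  then have "T \<union> P \<in> Q" "(T \<union> P) \<inter> \<sigma> = P"
    using assms unfolding cube_with_def by blast+
  then show "\<exists>c\<in>Q. c \<inter> \<sigma> = P"
    by blast
qed

lemma cube_with_del_class:
  assumes "cube_with X Q \<sigma> T" and "x \<notin> \<sigma>"
  shows "cube_with (X - {x}) (del_class Q x) \<sigma> (T - {x})"
proof -
  have "Q = {T \<union> Z | Z. Z \<subseteq> \<sigma>}" "\<sigma> \<subseteq> X" "T \<subseteq> X - \<sigma>"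
    using assms(1) unfolding cube_with_def by auto
  moreover have "T \<union> Z - {x} = T - {x} \<union> Z" if "Z \<subseteq> \<sigma>" for Z
    using that assms(2) by blast
  ultimately show ?thesis
    unfolding cube_with_def del_class_def using assms(2) by blast
qed

lemma cube_with_reduction:
  assumes "cube_with X Q \<sigma> T" and "y \<in> \<sigma>"
  shows "cube_with (X - {y}) (reduction Q y) (\<sigma> - {y}) T"
proof -
  have Q: "Q = {T \<union> Z | Z. Z \<subseteq> \<sigma>}" and "\<sigma> \<subseteq> X" and T: "T \<subseteq> X - \<sigma>"
    using assms(1) unfolding cube_with_def by auto
  have "z \<in> reduction Q y \<longleftrightarrow> z \<in> {T \<union> Z | Z. Z \<subseteq> \<sigma> - {y}}" for z
  proof
    assume "z \<in> reduction Q y"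
    then have "y \<notin> z" "z \<in> Q"
      by (simp_all add: mem_reduction_iff)
    then show "z \<in> {T \<union> Z | Z. Z \<subseteq> \<sigma> - {y}}"
      unfolding Q by blast
  next
    assume "z \<in> {T \<union> Z | Z. Z \<subseteq> \<sigma> - {y}}"
    then obtain Z where Z: "z = T \<union> Z" "Z \<subseteq> \<sigma> - {y}"
      by blast
    then have "y \<notin> z"
      using assms(2) T by blast
    moreover have "z \<in> Q"
      unfolding Q using Z by blast
    moreover have "insert y z = T \<union> insert y Z" "insert y Z \<subseteq> \<sigma>"
      using Z assms(2) by auto
    then have "insert y z \<in> Q"
      unfolding Q by blast
    ultimately show "z \<in> reduction Q y"
      by (simp add: mem_reduction_iff)
  qed
  then have "reduction Q y = {T \<union> Z | Z. Z \<subseteq> \<sigma> - {y}}"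
    by (rule set_eqI)
  moreover have "\<sigma> - {y} \<subseteq> X - {y}" "T \<subseteq> X - {y} - (\<sigma> - {y})"
    using \<open>\<sigma> \<subseteq> X\<close> T assms(2) by auto
  ultimately show ?thesis
    unfolding cube_with_def by simp
qed

lemma Diff_mem_reduction_if_cube_with:
  assumes "cube_with X Q \<sigma> T" and "y \<in> \<sigma>" and "c \<in> Q"
  shows "c - {y} \<in> reduction Q y"
proof -
  obtain Z where "Z \<subseteq> \<sigma>" "c = T \<union> Z" and "T \<subseteq> X - \<sigma>"
    using assms(1,3) unfolding cube_with_def by blast
  then have "c - {y} = T \<union> (Z - {y})" "Z - {y} \<subseteq> \<sigma> - {y}"
    using assms(2) by auto
  then have "c - {y} \<in> {T \<union> Z | Z. Z \<subseteq> \<sigma> - {y}}"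
    by blast
  then show ?thesis
    using cube_with_reduction[OF assms(1,2)] unfolding cube_with_def by simp
qed

lemma incomplete_cube_del_class:
  assumes "incomplete_cube X C D Q \<sigma>" and "x \<notin> \<sigma>"
  shows "incomplete_cube (X - {x}) (del_class C x) (del_class D x) (del_class Q x) \<sigma>"
proof -
  obtain T where "cube_with X Q \<sigma> T"
    using assms(1) unfolding incomplete_cube_def is_cube_def by blast
  then have "is_cube (X - {x}) (del_class Q x) \<sigma>"
    unfolding is_cube_def using cube_with_del_class[OF _ assms(2)] by blast
  moreover have "del_class Q x \<subseteq> del_class C x"
    using assms(1) unfolding incomplete_cube_def del_class_def by (simp add: image_mono)
  ultimately show ?thesis
    using assms(1) unfolding incomplete_cube_def shatters_del_class_iff[OF assms(2)] by simp
qed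

lemma is_source_del_class:
  assumes "is_source D Q \<sigma> s" and "x \<notin> \<sigma>"
  shows "is_source (del_class D x) (del_class Q x) \<sigma> (s - {x})"
  unfolding is_source_def restrict_class_del_class[OF assms(2)]
proof (intro conjI ballI impI)
  have s: "s \<in> Q" "s \<inter> \<sigma> \<notin> restrict_class D \<sigma>"
    and s_unique: "\<And>c. c \<in> Q \<Longrightarrow> c \<inter> \<sigma> \<notin> restrict_class D \<sigma> \<Longrightarrow> c = s"
    using assms(1) unfolding is_source_def by auto
  have cap: "(c - {x}) \<inter> \<sigma> = c \<inter> \<sigma>" for c
    using assms(2) by blast
  show "s - {x} \<in> del_class Q x"
    unfolding del_class_def using s(1) by (rule imageI)
  show "(s - {x}) \<inter> \<sigma> \<notin> restrict_class D \<sigma>"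
    unfolding cap by (rule s(2))
  fix c' assume c': "c' \<in> del_class Q x" "c' \<inter> \<sigma> \<notin> restrict_class D \<sigma>"
  then obtain c where "c \<in> Q" "c' = c - {x}"
    unfolding del_class_def by blast
  then show "c' = s - {x}"
    using s_unique c'(2) by (simp add: cap)
qed

lemma incomplete_cube_reduction:
  assumes "incomplete_cube X C D Q \<sigma>" and "y \<in> \<sigma>"
  shows "incomplete_cube (X - {y}) (reduction C y) (reduction D y) (reduction Q y) (\<sigma> - {y})"
proof -
  obtain T where "cube_with X Q \<sigma> T"
    using assms(1) unfolding incomplete_cube_def is_cube_def by blast
  then have cube: "cube_with (X - {y}) (reduction Q y) (\<sigma> - {y}) T"
    using assms(2) by (rule cube_with_reduction)
  have sub: "reduction Q y \<subseteq> reduction C y"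
    using assms(1) unfolding incomplete_cube_def by (simp add: reduction_mono)
  have "insert y (\<sigma> - {y}) = \<sigma>"
    using assms(2) by blast
  then have "\<not> shatters (reduction D y) (\<sigma> - {y})"
    using assms(1) shatters_insert_if_shatters_reduction[of y "\<sigma> - {y}" D]
    unfolding incomplete_cube_def by auto
  moreover have "shatters (reduction C y) (\<sigma> - {y})"
    using sub cube_with_shatters[OF cube] by (rule shatters_mono)
  moreover have "is_cube (X - {y}) (reduction Q y) (\<sigma> - {y})"
    unfolding is_cube_def using cube by (rule exI)
  ultimately show ?thesis
    unfolding incomplete_cube_def using sub by simp
qed

lemma is_source_reduction:
  assumes "cube_with X Q \<sigma> T" and "is_source D Q \<sigma> s" and "y \<in> \<sigma>"
    and "restrict_class (reduction D y) (\<sigma> - {y}) = reduction (restrict_class D \<sigma>) y"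
  shows "is_source (reduction D y) (reduction Q y) (\<sigma> - {y}) (s - {y})"
  unfolding is_source_def assms(4)
proof (intro conjI ballI impI)
  let ?R = "restrict_class D \<sigma>"
  have s: "s \<in> Q" "s \<inter> \<sigma> \<notin> ?R"
    and s_unique: "\<And>c. c \<in> Q \<Longrightarrow> c \<inter> \<sigma> \<notin> ?R \<Longrightarrow> c = s"
    using assms(2) unfolding is_source_def by auto
  show "s - {y} \<in> reduction Q y"
    using Diff_mem_reduction_if_cube_with[OF assms(1,3) s(1)] .
  show "(s - {y}) \<inter> (\<sigma> - {y}) \<notin> reduction ?R y"
  proof
    let ?w = "(s - {y}) \<inter> (\<sigma> - {y})"
    assume "?w \<in> reduction ?R y"
    then have "?w \<in> ?R" "insert y ?w \<in> ?R"
      by (simp_all add: mem_reduction_iff)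
    moreover have "s \<inter> \<sigma> = ?w \<or> s \<inter> \<sigma> = insert y ?w"
      using assms(3) by blast
    ultimately show False
      using s(2) by metis
  qed
  fix c assume c: "c \<in> reduction Q y" "c \<inter> (\<sigma> - {y}) \<notin> reduction ?R y"
  then have "y \<notin> c" "c \<in> Q" "insert y c \<in> Q"
    by (simp_all add: mem_reduction_iff)
  then have "c \<inter> (\<sigma> - {y}) = c \<inter> \<sigma>" "insert y (c \<inter> \<sigma>) = insert y c \<inter> \<sigma>" "y \<notin> c \<inter> \<sigma>"
    using assms(3) by blast+
  then have "\<not> (c \<inter> \<sigma> \<in> ?R \<and> insert y c \<inter> \<sigma> \<in> ?R)"
    using c(2) unfolding mem_reduction_iff by metis
  then have "c = s \<or> insert y c = s"
    using s_unique \<open>c \<in> Q\<close> \<open>insert y c \<in> Q\<close> by blast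
  then show "c = s - {y}"
    using \<open>y \<notin> c\<close> by blast
qed

theorem lemma5p4:
  fixes X :: "'a set" and C D Q :: "'a set set" and \<sigma> s :: "'a set" and x y :: 'a and d :: nat
  assumes "finite X"
    and "C \<subseteq> Pow X"
    and "maximum_class X C (int d)"
    and "D \<subseteq> C"
    and "maximum_class X D (int d - 1)"
    and "incomplete_cube X C D Q \<sigma>"
    and "is_source D Q \<sigma> s"
    and "x \<in> X" and "x \<notin> \<sigma>"
    and "y \<in> X" and "y \<in> \<sigma>"
  shows "(incomplete_cube (X - {x}) (del_class C x) (del_class D x) (del_class Q x) \<sigma>
           \<and> is_source (del_class D x) (del_class Q x) \<sigma> (s - {x}))
       \<and> (incomplete_cube (X - {y}) (reduction C y) (reduction D y) (reduction Q y) (\<sigma> - {y})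
           \<and> is_source (reduction D y) (reduction Q y) (\<sigma> - {y}) (s - {y}))"
proof -
  obtain T where cube: "cube_with X Q \<sigma> T"
    using assms(6) unfolding incomplete_cube_def is_cube_def by blast
  then have "\<sigma> \<subseteq> X"
    unfolding cube_with_def by blast
  have "restrict_class (reduction D y) (\<sigma> - {y}) = reduction (restrict_class D \<sigma>) y"
    using restrict_class_reduction_eq[OF maximum_class_meets_sauer_bound[OF assms(1,5)]
        \<open>\<sigma> \<subseteq> X\<close> assms(11)] .
  then show ?thesis
    using incomplete_cube_del_class[OF assms(6,9)] is_source_del_class[OF assms(7,9)]
      incomplete_cube_reduction[OF assms(6,11)] is_source_reduction[OF cube assms(7,11)]
    by blast
qed

end
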